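(* For arbitrary $\sigma\ge0$, $\theta\ge0$ and $\omega\ge0$, the second order differential operator $\sigma+\Delta_{\theta,\omega}$ maps $\mathcal P^+$ into itself.
   Context: $D=d/dz$, $\Delta_{\theta,\omega}=(\theta+\omega z)D+zD^2$. $\mathcal P^+$ is the set of complex polynomials of the form $C\prod_{j=1}^m(z+\pi_j)$ with $C\in\mathbb C$, $m\in\mathbb N_0$, $\pi_j\ge0$ (polynomials all of whose zeros are real and nonpositive, including constants). *)

theory Defs
  imports "HOL-Computational_Algebra.Polynomial" Complex_Main
begin

text \<open>The class P+ : polynomials C * prod_j (z + pi_j) with C complex, pi_j real and nonnegative
  (including constants, and the zero polynomial via C = 0).\<close>
definition Pplus :: "complex poly set" where
  "Pplus = {p. \<exists>(C::complex) (rs::real list). (\<forall>r\<in>set rs. r \<ge> 0) \<and>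
               p = smult C (\<Prod>r\<leftarrow>rs. [:complex_of_real r, 1:])}"

definition Delta :: "real \<Rightarrow> real \<Rightarrow> complex poly \<Rightarrow> complex poly" where
  "Delta \<theta> \<omega> p = [:complex_of_real \<theta>, complex_of_real \<omega>:] * pderiv p
                    + [:0, 1:] * pderiv (pderiv p)"

end

theory Submission
  imports Defs "HOL-Computational_Algebra.Fundamental_Theorem_Algebra" "HOL-Library.Nonpos_Ints"
begin

text \<open>
  Fix \<open>z \<notin> \<real>\<^sub>\<le>\<^sub>0\<close> and \<open>s = csqrt z\<close>. Then \<open>Re s > 0\<close>, and \<open>Re (s / (z + r)) > 0\<close> for every
  \<open>r \<ge> 0\<close>. For \<open>p = C \<Prod>(z + r\<^sub>j)\<close> the logarithmic derivative \<open>L = p'/p = \<Sum> 1/(z + r\<^sub>j)\<close>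
  therefore satisfies \<open>Re (s L) > 0\<close>; so \<open>p'\<close> has no roots off \<open>\<real>\<^sub>\<le>\<^sub>0\<close> and lies in P+ again
  (Gauss--Lucas), and \<open>M = p''/p'\<close> has the same shape. At \<open>z\<close>,
  \<open>\<sigma> p + \<Delta> p = p' s (\<sigma>/(s L) + \<theta>/s + \<omega> s + s M)\<close>, and each summand of the bracket has
  nonnegative real part; they can only all vanish if \<open>\<sigma> = \<theta> = \<omega> = 0\<close> and \<open>p'' = 0\<close>, i.e.\ if
  \<open>\<sigma> p + \<Delta> p = 0\<close>. Hence a nonzero \<open>\<sigma> p + \<Delta> p\<close> has all its roots in \<open>\<real>\<^sub>\<le>\<^sub>0\<close>, and by the
  fundamental theorem of algebra it is in P+.
\<close>

lemma add_of_real_nonzero: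
  fixes z :: complex
  assumes "z \<notin> \<real>\<^sub>\<le>\<^sub>0" "r \<ge> 0"
  shows "z + of_real r \<noteq> 0"
  using assms by (auto simp: complex_nonpos_Reals_iff complex_eq_iff)

lemma Re_csqrt_pos:
  assumes "z \<notin> \<real>\<^sub>\<le>\<^sub>0"
  shows "Re (csqrt z) > 0"
proof (rule ccontr)
  obtain a b where s: "csqrt z = Complex a b"
    using complex.exhaust by blast
  assume "\<not> Re (csqrt z) > 0"
  then have "a = 0"
    using Re_csqrt[of z] by (simp add: s)
  then have "z = - of_real (b\<^sup>2)"
    using power2_csqrt[of z] by (simp add: s complex_eq_iff power2_eq_square)
  with assms show False
    by (simp add: complex_nonpos_Reals_iff)
qed

lemma Re_csqrt_divide_add_pos:
  assumes "z \<notin> \<real>\<^sub>\<le>\<^sub>0" "r \<ge> 0"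
  shows "Re (csqrt z / (z + of_real r)) > 0"
proof -
  obtain a b where s: "csqrt z = Complex a b"
    using complex.exhaust by blast
  have a: "a > 0"
    using Re_csqrt_pos[OF assms(1)] by (simp add: s)
  have z: "z = Complex (a\<^sup>2 - b\<^sup>2) (2 * a * b)"
    using power2_csqrt[of z] by (simp add: s complex_eq_iff power2_eq_square)
  have "a * Re (z + of_real r) + b * Im (z + of_real r) = a * (a\<^sup>2 + b\<^sup>2 + r)"
    by (simp add: z power2_eq_square algebra_simps)
  also have "\<dots> > 0"
    using a assms(2) zero_le_power2[of b] by (simp add: add_pos_nonneg)
  moreover have "(Re (z + of_real r))\<^sup>2 + (Im (z + of_real r))\<^sup>2 > 0"
    using add_of_real_nonzero[OF assms] by (simp add: sum_power2_gt_zero_iff complex_eq_iff)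
  ultimately show ?thesis
    by (simp add: Re_divide s)
qed

lemma Re_csqrt_mult_sum_pos:
  assumes "z \<notin> \<real>\<^sub>\<le>\<^sub>0" "\<forall>r\<in>set rs. r \<ge> 0" "rs \<noteq> []"
  shows "Re (csqrt z * (\<Sum>r\<leftarrow>rs. 1 / (z + of_real r))) > 0"
  using assms(2,3)
proof (induction rs)
  case (Cons r rs)
  have "Re (csqrt z / (z + of_real r)) > 0"
    using Cons.prems assms(1) by (intro Re_csqrt_divide_add_pos) auto
  moreover have "Re (csqrt z * (\<Sum>r\<leftarrow>rs. 1 / (z + of_real r))) \<ge> 0"
    using Cons by (cases "rs = []") auto
  ultimately show ?case
    by (simp add: distrib_left)
qed simp

lemma Re_one_divide_pos:
  fixes w :: complex
  assumes "Re w > 0"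
  shows "Re (1 / w) > 0"
proof -
  have "(Re w)\<^sup>2 + (Im w)\<^sup>2 > 0"
    using assms by (simp add: sum_power2_gt_zero_iff)
  with assms show ?thesis
    by (simp add: Re_divide)
qed

lemma right_half_plane_sum_eq_0D:
  fixes \<sigma> \<theta> \<omega> :: real and s L M :: complex
  assumes "\<sigma> \<ge> 0" "\<theta> \<ge> 0" "\<omega> \<ge> 0" "Re s > 0" "Re (s * L) > 0" "Re (s * M) \<ge> 0"
    and sum: "\<sigma> / (s * L) + \<theta> / s + \<omega> * s + s * M = 0"
  shows "\<sigma> = 0" "\<theta> = 0" "\<omega> = 0" "Re (s * M) = 0"
proof -
  have "Re (1 / (s * L)) > 0" "Re (1 / s) > 0"
    using Re_one_divide_pos assms(4,5) by blast+
  moreover have "\<sigma> * Re (1 / (s * L)) + \<theta> * Re (1 / s) + \<omega> * Re s + Re (s * M) = 0"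
    using arg_cong[OF sum, of Re] by (simp add: Re_divide)
  ultimately show "\<sigma> = 0" "\<theta> = 0" "\<omega> = 0" "Re (s * M) = 0"
    using assms(1-4,6) by (smt (verit) mult_nonneg_nonneg mult_pos_pos)+
qed

lemma poly_pderiv_prod_linear:
  fixes as :: "'a::field list"
  assumes "\<forall>a\<in>set as. x + a \<noteq> 0"
  shows "poly (pderiv (\<Prod>a\<leftarrow>as. [:a, 1:])) x = poly (\<Prod>a\<leftarrow>as. [:a, 1:]) x * (\<Sum>a\<leftarrow>as. 1 / (x + a))"
  using assms
proof (induction as)
  case (Cons a as)
  then show ?case
    by (simp add: pderiv_mult pderiv_pCons field_simps del: mult_pCons_left)
qed simp

lemma poly_prod_linear_nonzero:
  assumes "z \<notin> \<real>\<^sub>\<le>\<^sub>0" "\<forall>r\<in>set rs. r \<ge> 0"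
  shows "poly (\<Prod>r\<leftarrow>rs. [:complex_of_real r, 1:]) z \<noteq> 0"
  using assms(2) add_of_real_nonzero[OF assms(1)]
  by (induction rs) (auto simp: add.commute simp del: mult_pCons_left)

lemma poly_pderiv_smult_prod_linear:
  assumes "z \<notin> \<real>\<^sub>\<le>\<^sub>0" "\<forall>r\<in>set rs. r \<ge> 0"
  shows "poly (pderiv (smult C (\<Prod>r\<leftarrow>rs. [:complex_of_real r, 1:]))) z
       = poly (smult C (\<Prod>r\<leftarrow>rs. [:complex_of_real r, 1:])) z * (\<Sum>r\<leftarrow>rs. 1 / (z + of_real r))"
  using poly_pderiv_prod_linear[of "map of_real rs" z] assms add_of_real_nonzero
  by (simp add: pderiv_smult o_def)

lemma poly_smult_add_Delta:
  assumes "poly (pderiv p) z = poly p z * L" "poly (pderiv (pderiv p)) z = poly (pderiv p) z * M"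
    and "s * s = z" "L \<noteq> 0" "s \<noteq> 0"
  shows "poly (smult (complex_of_real \<sigma>) p + Delta \<theta> \<omega> p) z
       = poly (pderiv p) z * s * (\<sigma> / (s * L) + \<theta> / s + \<omega> * s + s * M)"
  using assms by (simp add: Delta_def field_simps)

lemma zero_in_Pplus: "0 \<in> Pplus"
  unfolding Pplus_def by (intro CollectI exI[of _ 0] exI[of _ "[]"]) simp

lemma Pplus_if_roots_nonpos_Reals:
  assumes "\<And>z. poly q z = 0 \<Longrightarrow> z \<in> \<real>\<^sub>\<le>\<^sub>0"
  shows "q \<in> Pplus"
proof -
  have "q \<noteq> 0"
    using assms[of 1] by auto
  obtain zs where zs: "mset zs = proots q"
    using ex_mset by blast
  have roots: "Im z = 0 \<and> Re z \<le> 0" if "z \<in> set zs" for z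
    using that assms \<open>q \<noteq> 0\<close> by (simp flip: set_mset_mset add: zs complex_nonpos_Reals_iff)
  have "q = smult (lead_coeff q) (\<Prod>z\<leftarrow>zs. [:-z, 1:])"
    using complex_poly_decompose_multiset[of q] by (simp flip: zs prod_mset_prod_list)
  also have "(\<Prod>z\<leftarrow>zs. [:-z, 1:]) = (\<Prod>r\<leftarrow>map (\<lambda>z. - Re z) zs. [:complex_of_real r, 1:])"
    unfolding map_map o_def using roots
    by (intro arg_cong[where f = prod_list] map_cong) (simp_all add: complex_eq_iff)
  finally have "q = smult (lead_coeff q) (\<Prod>r\<leftarrow>map (\<lambda>z. - Re z) zs. [:complex_of_real r, 1:])" .
  moreover have "\<forall>r\<in>set (map (\<lambda>z. - Re z) zs). r \<ge> 0"
    using roots by auto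
  ultimately show ?thesis
    unfolding Pplus_def by blast
qed

lemma pderiv_in_Pplus:
  assumes "p \<in> Pplus"
  shows "pderiv p \<in> Pplus"
proof -
  obtain C rs where rs: "\<forall>r\<in>set rs. r \<ge> 0" and p: "p = smult C (\<Prod>r\<leftarrow>rs. [:complex_of_real r, 1:])"
    using assms unfolding Pplus_def by blast
  show ?thesis
  proof (cases "C = 0 \<or> rs = []")
    case True
    then show ?thesis
      using zero_in_Pplus by (auto simp: p)
  next
    case False
    show ?thesis
    proof (rule Pplus_if_roots_nonpos_Reals, rule ccontr)
      fix z assume root: "poly (pderiv p) z = 0" and z: "z \<notin> \<real>\<^sub>\<le>\<^sub>0"
      have "Re (csqrt z * (\<Sum>r\<leftarrow>rs. 1 / (z + of_real r))) > 0"
        using Re_csqrt_mult_sum_pos[OF z rs] False by blast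
      then have "(\<Sum>r\<leftarrow>rs. 1 / (z + of_real r)) \<noteq> 0"
        by auto
      moreover have "poly p z \<noteq> 0"
        using poly_prod_linear_nonzero[OF z rs] False by (simp add: p)
      ultimately show False
        using root poly_pderiv_smult_prod_linear[OF z rs, of C] by (simp flip: p)
    qed
  qed
qed

lemma Delta_eq_0_if_root_outside_nonpos_Reals:
  fixes \<sigma> \<theta> \<omega> :: real
  assumes "\<sigma> \<ge> 0" "\<theta> \<ge> 0" "\<omega> \<ge> 0" "p \<in> Pplus" and z: "z \<notin> \<real>\<^sub>\<le>\<^sub>0"
    and root: "poly (smult (complex_of_real \<sigma>) p + Delta \<theta> \<omega> p) z = 0"
  shows "smult (complex_of_real \<sigma>) p + Delta \<theta> \<omega> p = 0"
proof (cases "pderiv p = 0")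
  case True
  then obtain c where "p = [:c:]"
    by (metis pderiv_eq_0_iff degree_eq_zeroE)
  with root show ?thesis
    by (simp add: Delta_def)
next
  case False
  obtain C rs where rs: "\<forall>r\<in>set rs. r \<ge> 0" and p: "p = smult C (\<Prod>r\<leftarrow>rs. [:complex_of_real r, 1:])"
    using assms(4) unfolding Pplus_def by blast
  obtain D ps where ps: "\<forall>r\<in>set ps. r \<ge> 0" and p': "pderiv p = smult D (\<Prod>r\<leftarrow>ps. [:complex_of_real r, 1:])"
    using pderiv_in_Pplus[OF assms(4)] unfolding Pplus_def by blast
  define s where "s = csqrt z"
  define L where "L = (\<Sum>r\<leftarrow>rs. 1 / (z + of_real r))"
  define M where "M = (\<Sum>r\<leftarrow>ps. 1 / (z + of_real r))"
  have "C \<noteq> 0" "rs \<noteq> []"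
    using False by (auto simp: p)
  have s: "s * s = z" "Re s > 0"
    using Re_csqrt_pos[OF z] by (simp_all add: s_def flip: power2_eq_square)
  have sL: "Re (s * L) > 0"
    unfolding s_def L_def using Re_csqrt_mult_sum_pos[OF z rs \<open>rs \<noteq> []\<close>] .
  have sM: "Re (s * M) > 0" if "ps \<noteq> []"
    unfolding s_def M_def using Re_csqrt_mult_sum_pos[OF z ps that] .
  have f': "poly (pderiv p) z = poly p z * L"
    unfolding p L_def by (rule poly_pderiv_smult_prod_linear[OF z rs])
  have f'': "poly (pderiv (pderiv p)) z = poly (pderiv p) z * M"
    unfolding p' M_def by (rule poly_pderiv_smult_prod_linear[OF z ps])
  have "L \<noteq> 0" "s \<noteq> 0"
    using sL s(2) by auto
  moreover have "poly p z \<noteq> 0"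
    using poly_prod_linear_nonzero[OF z rs] \<open>C \<noteq> 0\<close> by (simp add: p)
  ultimately have "poly (pderiv p) z * s \<noteq> 0"
    using f' by simp
  then have sum: "\<sigma> / (s * L) + \<theta> / s + \<omega> * s + s * M = 0"
    using root poly_smult_add_Delta[OF f' f'' s(1) \<open>L \<noteq> 0\<close> \<open>s \<noteq> 0\<close>] by simp
  have "Re (s * M) \<ge> 0"
    using sM by (cases "ps = []") (auto simp: M_def)
  note vanish = right_half_plane_sum_eq_0D[OF assms(1-3) s(2) sL this sum]
  then have "ps = []"
    using sM by force
  with vanish show ?thesis
    using p' by (simp add: Delta_def)
qed

theorem lemma3:
  fixes \<sigma> \<theta> \<omega> :: real and p :: "complex poly"
  assumes "\<sigma> \<ge> 0" and "\<theta> \<ge> 0" and "\<omega> \<ge> 0" and "p \<in> Pplus"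
  shows "smult (complex_of_real \<sigma>) p + Delta \<theta> \<omega> p \<in> Pplus"
proof (cases "smult (complex_of_real \<sigma>) p + Delta \<theta> \<omega> p = 0")
  case True
  then show ?thesis
    using zero_in_Pplus by simp
next
  case False
  then show ?thesis
    using Delta_eq_0_if_root_outside_nonpos_Reals[OF assms] by (blast intro: Pplus_if_roots_nonpos_Reals)
qed

end
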